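(* Let $\alpha$ be a parameter, $\lambda\in\mathbb{C}$, and let $n_1'>\dots>n_{p}'\ge0$ and $m_1'>\dots>m_{q}'\ge0$ be integers; put $r=p+q$. Consider $$G(x,\lambda)=e^{-px}x^{\alpha(r+1)}\,\mathrm{Wr}\left[x^{-\alpha}L^{-\alpha}_{m_1'}(x),\dots,x^{-\alpha}L^{-\alpha}_{m_q'}(x),e^xx^{-\alpha}L^{-\alpha}_{n_1'}(-x),\dots,e^xx^{-\alpha}L^{-\alpha}_{n_p'}(-x),x^{-\alpha}M(-\lambda-\alpha,1-\alpha,x)\right].$$ Let $\mathbf{s}$ be the smallest positive integer with $n_i'<r$ for all $i\ge\mathbf{s}$ and $n_i'\ge r$ for all $i<\mathbf{s}$ ($\mathbf{s}=p+1$ if none exists), and $\mathbf{s}'$ the smallest positive integer with $m_j'<r$ for all $j\ge\mathbf{s}'$ and $m_j'\ge r$ for all $j<\mathbf{s}'$ ($\mathbf{s}'=q+1$ if none exists). Then, up to a factor $\pm1$, $G(0,\lambda)$ equals $$\frac{\prod_{k=1}^{r+1}(-\alpha+k)^{(r+1-k)}\prod_{j=1}^{\mathbf{s}'-1}(-\alpha+r+1)^{(m_j'-r)}\prod_{i=1}^{\mathbf{s}-1}(-\alpha+r+1)^{(n_i'-r)}\;\Delta\big(-m_q',\dots,-m_1',-\alpha+1+n_1',\dots,-\alpha+1+n_p',-\lambda-\alpha\big)}{(1-\alpha)^{(r)}\prod_{j=\mathbf{s}'}^{q}(-\alpha+1+m_j')^{(r-m_j')}\prod_{i=\mathbf{s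}}^{p}(-\alpha+1+n_i')^{(r-n_i')}\prod_{j=1}^{q}m_j'!\prod_{i=1}^{p}n_i'!}.$$
   Context: $L_n^{\beta}$ is the classical Laguerre polynomial and $M(a,b,x)={}_1F_1(a;b;x)$; $\mathrm{Wr}$ is the Wronskian; $G(0,\lambda)$ denotes the value at $x=0$ of the function $G$ (which is analytic at $0$ after the cancellations of powers of $x$). Rising factorial $a^{(n)}=a(a+1)\cdots(a+n-1)$, $a^{(0)}=1$; Vandermonde $\Delta(a_1,\dots,a_k)=\prod_{i<j}(a_j-a_i)$. In the paper's notation $G(x,\lambda)=\Omega_{\mu',\nu'}[\widetilde h^{\alpha}(x,\lambda)]$, the Darboux-transformed second solution associated with the conjugate canonical Maya diagrams $(n_1',\dots,n_p'\,|\,\emptyset)$ and $(m_1',\dots,m_q'\,|\,\emptyset)$. The paper ignores overall factors $(-1)^d$. *)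

theory Defs
  imports "HOL-Analysis.Analysis" "HOL-Combinatorics.Permutations"
begin

text \<open>Classical Laguerre polynomial with complex parameter:
  L_n^b(x) = sum_{k=0}^n binom(n+b, n-k) (-x)^k / k!,
  where binom(n+b, n-k) = (b+k+1)^{(n-k)} / (n-k)!.\<close>
definition laguerre :: "nat \<Rightarrow> complex \<Rightarrow> complex \<Rightarrow> complex" where
  "laguerre n b x =
     (\<Sum>k\<le>n. pochhammer (b + of_nat k + 1) (n - k) / fact (n - k) * (- x) ^ k / fact k)"

definition kummerM :: "complex \<Rightarrow> complex \<Rightarrow> complex \<Rightarrow> complex" where
  "kummerM a b x = (\<Sum>k. pochhammer a k / pochhammer b k * x ^ k / fact k)"

definition wronskian :: "(complex \<Rightarrow> complex) list \<Rightarrow> complex \<Rightarrow> complex" where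
  "wronskian fs x =
     (\<Sum>\<sigma> | \<sigma> permutes {..<length fs}.
        of_int (sign \<sigma>) * (\<Prod>i<length fs. (deriv ^^ i) (fs ! \<sigma> i) x))"

definition vandermonde :: "complex list \<Rightarrow> complex" where
  "vandermonde as = (\<Prod>j<length as. \<Prod>i<j. (as ! j - as ! i))"

text \<open>The function G(x,lambda); ns = [n_1',...,n_p'], ms = [m_1',...,m_q'].\<close>
definition G_fun :: "real \<Rightarrow> complex \<Rightarrow> nat list \<Rightarrow> nat list \<Rightarrow> complex \<Rightarrow> complex" where
  "G_fun \<alpha> lam ns ms x =
     (let a = complex_of_real \<alpha>; p = length ns; q = length ms; r = p + q in
      exp (- of_nat p * x) * x powr (a * of_nat (r + 1)) *
      wronskian
        (map (\<lambda>m. (\<lambda>y. y powr (- a) * laguerre m (- a) y)) ms @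
         map (\<lambda>n. (\<lambda>y. exp y * y powr (- a) * laguerre n (- a) (- y))) ns @
         [(\<lambda>y. y powr (- a) * kummerM (- lam - a) (1 - a) y)]) x)"

definition split_idx :: "nat list \<Rightarrow> nat \<Rightarrow> nat" where
  "split_idx ns r =
     (if \<exists>s. 1 \<le> s \<and> (\<forall>i\<in>{s..length ns}. ns ! (i - 1) < r) \<and> (\<forall>i\<in>{1..<s}. ns ! (i - 1) \<ge> r)
      then (LEAST s. 1 \<le> s \<and> (\<forall>i\<in>{s..length ns}. ns ! (i - 1) < r) \<and> (\<forall>i\<in>{1..<s}. ns ! (i - 1) \<ge> r))
      else length ns + 1)"

definition G0_formula :: "real \<Rightarrow> complex \<Rightarrow> nat list \<Rightarrow> nat list \<Rightarrow> complex" where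
  "G0_formula \<alpha> lam ns ms =
     (let a = complex_of_real \<alpha>; p = length ns; q = length ms; r = p + q;
          s = split_idx ns r; s' = split_idx ms r in
      ((\<Prod>k=1..r+1. pochhammer (- a + of_nat k) (r + 1 - k)) *
       (\<Prod>j=1..s'-1. pochhammer (- a + of_nat r + 1) (ms ! (j - 1) - r)) *
       (\<Prod>i=1..s-1. pochhammer (- a + of_nat r + 1) (ns ! (i - 1) - r)) *
       vandermonde (map (\<lambda>m. - of_nat m) (rev ms) @
                    map (\<lambda>n. - a + 1 + of_nat n) ns @ [- lam - a]))
      /
      (pochhammer (1 - a) r *
       (\<Prod>j=s'..q. pochhammer (- a + 1 + of_nat (ms ! (j - 1))) (r - ms ! (j - 1))) *
       (\<Prod>i=s..p. pochhammer (- a + 1 + of_nat (ns ! (i - 1))) (r - ns ! (i - 1))) *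
       (\<Prod>j<q. fact (ms ! j)) * (\<Prod>i<p. fact (ns ! i))))"

end

theory Submission
  imports Defs "Jordan_Normal_Form.Determinant" "HOL-Complex_Analysis.Complex_Analysis"
    "HOL-Real_Asymp.Real_Asymp"
begin

(* Since x^(-alpha) is a common factor of all columns, the Leibniz rule writes the Wronskian matrix
  of g f_1, ..., g f_N as a lower triangular matrix with diagonal g times the Wronskian matrix of
  f_1, ..., f_N, and the resulting factor x^(-alpha (r+1)) cancels against x^(alpha (r+1)).  Hence
  G(x, lambda) is e^(-px) times the Wronskian of the entire functions L_m(x), e^x L_n(-x) and
  M(-lambda-alpha, 1-alpha, x), and its limit at 0 is their Wronskian at 0.  The i-th derivatives
  of these functions at 0 are w_j c_j^(i) / (1-alpha)^(i) with nodes c_j = -m_j, 1-alpha+n_j,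
  -lambda-alpha, and det [c_j^(i)] is the Vandermonde determinant of the c_j.  The closed form
  arises by splitting the Pochhammer symbols (1-alpha)^(m_j), (1-alpha)^(n_i) in w_j at r. *)

section \<open>Determinants and Wronskians\<close>

lemma wronskian_eq_det:
  "wronskian fs x = det (mat (length fs) (length fs) (\<lambda>(i,j). (deriv ^^ i) (fs ! j) x))"
proof -
  let ?n = "length fs"
  have "det (mat ?n ?n (\<lambda>(i,j). (deriv ^^ i) (fs ! j) x)) =
    (\<Sum>p \<in> {p. p permutes {0..<?n}}. of_int (sign p) *
       (\<Prod>i=0..<?n. mat ?n ?n (\<lambda>(i,j). (deriv ^^ i) (fs ! j) x) $$ (i, p i)))"
    by (rule det_def') auto
  also have "\<dots> = wronskian fs x"
    unfolding wronskian_def atLeast0LessThan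
  proof (intro sum.cong arg_cong2[where f = "(*)"] prod.cong refl)
    fix p i assume "p \<in> {p. p permutes {..<?n}}" "i \<in> {..<?n}"
    then show "mat ?n ?n (\<lambda>(i,j). (deriv ^^ i) (fs ! j) x) $$ (i, p i) = (deriv ^^ i) (fs ! p i) x"
      using permutes_in_image by fastforce
  qed
  finally show ?thesis by simp
qed

lemma det_mat_scale_rows_cols:
  fixes A :: "nat \<Rightarrow> nat \<Rightarrow> 'a::comm_ring_1"
  shows "det (mat n n (\<lambda>(i,j). r i * s j * A i j)) =
    (\<Prod>i<n. r i) * (\<Prod>j<n. s j) * det (mat n n (\<lambda>(i,j). A i j))"
proof -
  have entrywise: "(\<Prod>i=0..<n. mat n n (\<lambda>(i,j). r i * s j * A i j) $$ (i, p i)) =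
      (\<Prod>i<n. r i) * (\<Prod>j<n. s j) * (\<Prod>i=0..<n. mat n n (\<lambda>(i,j). A i j) $$ (i, p i))"
    if p: "p permutes {0..<n}" for p
  proof -
    have "(\<Prod>i=0..<n. mat n n (\<lambda>(i,j). r i * s j * A i j) $$ (i, p i)) =
        (\<Prod>i=0..<n. r i) * (\<Prod>i=0..<n. s (p i)) * (\<Prod>i=0..<n. A i (p i))"
      using permutes_in_image[OF p] by (simp add: prod.distrib)
    also have "(\<Prod>i=0..<n. s (p i)) = (\<Prod>i=0..<n. s i)"
      using prod.permute[OF p, of s] by (simp add: comp_def)
    also have "(\<Prod>i=0..<n. A i (p i)) = (\<Prod>i=0..<n. mat n n (\<lambda>(i,j). A i j) $$ (i, p i))"
      using permutes_in_image[OF p] by simp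
    finally show ?thesis by (simp add: atLeast0LessThan)
  qed
  have "det (mat n n (\<lambda>(i,j). r i * s j * A i j)) = (\<Sum>p \<in> {p. p permutes {0..<n}}.
      of_int (sign p) * (\<Prod>i=0..<n. mat n n (\<lambda>(i,j). r i * s j * A i j) $$ (i, p i)))"
    by (rule det_def') auto
  also have "\<dots> = (\<Prod>i<n. r i) * (\<Prod>j<n. s j) * (\<Sum>p \<in> {p. p permutes {0..<n}}.
      of_int (sign p) * (\<Prod>i=0..<n. mat n n (\<lambda>(i,j). A i j) $$ (i, p i)))"
    unfolding sum_distrib_left
  proof (rule sum.cong)
    fix p assume "p \<in> {p. p permutes {0..<n}}"
    then show "of_int (sign p) * (\<Prod>i=0..<n. mat n n (\<lambda>(i,j). r i * s j * A i j) $$ (i, p i)) =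
        (\<Prod>i<n. r i) * (\<Prod>j<n. s j) *
        (of_int (sign p) * (\<Prod>i=0..<n. mat n n (\<lambda>(i,j). A i j) $$ (i, p i)))"
      using entrywise[of p] by (simp add: ac_simps)
  qed simp
  also have "\<dots> = (\<Prod>i<n. r i) * (\<Prod>j<n. s j) * det (mat n n (\<lambda>(i,j). A i j))"
    by (subst det_def'[of _ n]) auto
  finally show ?thesis .
qed

lemma det_mat_mult_lower_triangular:
  fixes A L :: "nat \<Rightarrow> nat \<Rightarrow> 'a::comm_ring_1"
  shows "det (mat n n (\<lambda>(i,j). \<Sum>l\<le>i. L i l * A l j)) =
    (\<Prod>i<n. L i i) * det (mat n n (\<lambda>(i,j). A i j))"
proof -
  define L' where "L' = mat n n (\<lambda>(i,l). if l \<le> i then L i l else 0)"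
  define A' where "A' = mat n n (\<lambda>(i,j). A i j)"
  have carrier: "L' \<in> carrier_mat n n" "A' \<in> carrier_mat n n"
    unfolding L'_def A'_def by auto
  have "L' * A' = mat n n (\<lambda>(i,j). \<Sum>l\<le>i. L i l * A l j)"
  proof (rule eq_matI)
    fix i j assume "i < dim_row (mat n n (\<lambda>(i,j). \<Sum>l\<le>i. L i l * A l j))"
      "j < dim_col (mat n n (\<lambda>(i,j). \<Sum>l\<le>i. L i l * A l j))"
    then have i: "i < n" and j: "j < n" by auto
    have "(L' * A') $$ (i,j) = (\<Sum>l\<in>{0..<n}. if l \<in> {..i} then L i l * A l j else 0)"
      using i j unfolding L'_def A'_def
      by (auto simp: scalar_prod_def intro!: sum.cong)
    also have "\<dots> = (\<Sum>l\<le>i. L i l * A l j)"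
      using i by (subst sum.inter_restrict[symmetric]) (auto intro!: sum.cong)
    finally show "(L' * A') $$ (i,j) = mat n n (\<lambda>(i,j). \<Sum>l\<le>i. L i l * A l j) $$ (i,j)"
      using i j by simp
  qed (auto simp: L'_def A'_def)
  moreover have "det L' = (\<Prod>i<n. L i i)"
    by (subst det_lower_triangular[OF _ carrier(1)])
       (auto simp: L'_def prod_list_diag_prod atLeast0LessThan)
  ultimately show ?thesis
    using det_mult[OF carrier] A'_def by simp
qed

lemma det_mat_pochhammer:
  fixes c :: "nat \<Rightarrow> 'a::comm_ring_1"
  shows "det (mat n n (\<lambda>(i,j). pochhammer (c j) i)) = (\<Prod>j<n. \<Prod>i<j. (c j - c i))"
proof (induction n arbitrary: c)
  case 0
  then show ?case by (simp add: det_dim_zero)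
next
  case (Suc n)
  \<comment> \<open>Subtracting (c 0 + i - 1) times row i - 1 from row i leaves (c j - c 0) (c j)^(i-1) in row i.\<close>
  define L where "L i l = (if l = i then 1 else if Suc l = i then - (c 0 + of_nat l) else (0::'a))" for i l
  define B where "B i j = (if i = 0 then 1 else (c j - c 0) * pochhammer (c j) (i - 1))" for i j
  have row_op: "(\<Sum>l\<le>i. L i l * pochhammer (c j) l) = B i j" for i j
  proof (cases i)
    case (Suc i')
    have "(\<Sum>l\<le>i. L i l * pochhammer (c j) l) =
        - (c 0 + of_nat i') * pochhammer (c j) i' + pochhammer (c j) i' * (c j + of_nat i')"
      unfolding Suc by (simp add: L_def pochhammer_Suc sum.neutral lessThan_Suc_atMost[symmetric])
    then show ?thesis by (simp add: B_def Suc algebra_simps)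
  qed (simp add: L_def B_def)
  let ?B = "mat (Suc n) (Suc n) (\<lambda>(i,j). B i j)"
  have "mat (Suc n) (Suc n) (\<lambda>(i,j). \<Sum>l\<le>i. L i l * pochhammer (c j) l) = ?B"
    by (rule eq_matI) (auto simp: row_op)
  then have "det (mat (Suc n) (Suc n) (\<lambda>(i,j). pochhammer (c j) i)) = det ?B"
    using det_mat_mult_lower_triangular[of "Suc n" L "\<lambda>l j. pochhammer (c j) l"]
    by (simp add: L_def)
  also have "\<dots> = (\<Sum>i<Suc n. ?B $$ (i,0) * cofactor ?B i 0)"
    by (rule laplace_expansion_column) auto
  also have "\<dots> = det (mat_delete ?B 0 0)"
    by (simp add: sum.lessThan_Suc_shift B_def cofactor_def del: sum.lessThan_Suc)
  also have "mat_delete ?B 0 0 = mat n n (\<lambda>(i,j). 1 * (c (Suc j) - c 0) * pochhammer (c (Suc j)) i)"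
    by (rule eq_matI) (auto simp: mat_delete_def B_def)
  also have "det \<dots> = (\<Prod>j<n. c (Suc j) - c 0) * (\<Prod>j<n. \<Prod>i<j. (c (Suc j) - c (Suc i)))"
    using det_mat_scale_rows_cols[of n "\<lambda>_. 1" "\<lambda>j. c (Suc j) - c 0" "\<lambda>i j. pochhammer (c (Suc j)) i"]
      Suc.IH[of "\<lambda>j. c (Suc j)"] by simp
  also have "\<dots> = (\<Prod>j<Suc n. \<Prod>i<j. (c j - c i))"
    by (simp add: prod.lessThan_Suc_shift[where n=n] prod.lessThan_Suc_shift[where g="\<lambda>i. c (Suc _) - c i"]
        prod.distrib del: prod.lessThan_Suc)
  finally show ?case .
qed

lemma wronskian_map_mult_left:
  assumes "open S" "x \<in> S" and g: "g holomorphic_on S"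
    and fs: "\<forall>f\<in>set fs. f holomorphic_on S"
  shows "wronskian (map (\<lambda>f y. g y * f y) fs) x = g x ^ length fs * wronskian fs x"
proof -
  let ?n = "length fs"
  define L where "L i l = of_nat (i choose l) * (deriv ^^ (i - l)) g x" for i l
  have leibniz: "(deriv ^^ i) (\<lambda>y. g y * (fs ! j) y) x = (\<Sum>l\<le>i. L i l * (deriv ^^ l) (fs ! j) x)"
    if "j < ?n" for i j
  proof -
    have "fs ! j holomorphic_on S" using fs that by auto
    then have "(deriv ^^ i) (\<lambda>y. (fs ! j) y * g y) x =
        (\<Sum>l = 0..i. of_nat (i choose l) * (deriv ^^ l) (fs ! j) x * (deriv ^^ (i - l)) g x)"
      using g assms(1,2) by (rule higher_deriv_mult)
    then show ?thesis
      by (simp add: L_def atLeast0AtMost ac_simps)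
  qed
  have "wronskian (map (\<lambda>f y. g y * f y) fs) x =
      det (mat ?n ?n (\<lambda>(i,j). (deriv ^^ i) (map (\<lambda>f y. g y * f y) fs ! j) x))"
    using wronskian_eq_det[of "map (\<lambda>f y. g y * f y) fs" x] by simp
  also have "mat ?n ?n (\<lambda>(i,j). (deriv ^^ i) (map (\<lambda>f y. g y * f y) fs ! j) x) =
      mat ?n ?n (\<lambda>(i,j). \<Sum>l\<le>i. L i l * (deriv ^^ l) (fs ! j) x)"
    by (rule eq_matI) (auto simp: leibniz)
  also have "det \<dots> = (\<Prod>i<?n. L i i) * wronskian fs x"
    unfolding det_mat_mult_lower_triangular wronskian_eq_det by (rule refl)
  also have "(\<Prod>i<?n. L i i) = g x ^ ?n"
    by (simp add: L_def)
  finally show ?thesis .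
qed

lemma isCont_wronskian:
  assumes "\<forall>f\<in>set fs. f holomorphic_on UNIV"
  shows "isCont (wronskian fs) x"
proof -
  have "isCont ((deriv ^^ i) (fs ! j)) x" if "j < length fs" for i j
  proof -
    have "(deriv ^^ i) (fs ! j) holomorphic_on UNIV"
      by (rule holomorphic_higher_deriv) (use assms that in auto)
    then show ?thesis
      by (meson holomorphic_on_imp_continuous_on continuous_on_eq_continuous_at open_UNIV UNIV_I)
  qed
  then show ?thesis
    unfolding wronskian_def[abs_def]
  proof (intro continuous_intros)
    fix \<sigma> i assume "\<sigma> \<in> {\<sigma>. \<sigma> permutes {..<length fs}}" "i \<in> {..<length fs}"
    then have "\<sigma> i < length fs"
      using permutes_in_image by fastforce
    then show "isCont ((deriv ^^ i) (fs ! \<sigma> i)) x"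
      by fact
  qed
qed

section \<open>Taylor coefficients of the columns at the origin\<close>

lemma holomorphic_on_polyfun: "(\<lambda>z::complex. \<Sum>k\<le>m. d k * z ^ k) holomorphic_on S"
  by (intro holomorphic_intros)

lemma higher_deriv_polyfun_0:
  "(deriv ^^ i) (\<lambda>z::complex. \<Sum>k\<le>m. d k * z ^ k) 0 = (if i \<le> m then fact i * d i else 0)"
proof -
  let ?F = "\<Sum>k\<le>m. fps_const (d k) * fps_X ^ k"
  have "(\<lambda>z::complex. \<Sum>k\<le>m. d k * z ^ k) has_fps_expansion ?F"
    by (intro has_fps_expansion_sum has_fps_expansion_cmult_left has_fps_expansion_fps_X_power)
  then have "fps_nth ?F i = (deriv ^^ i) (\<lambda>z::complex. \<Sum>k\<le>m. d k * z ^ k) 0 / fact i"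
    by (rule fps_nth_fps_expansion)
  moreover have "fps_nth ?F i = (if i \<le> m then d i else 0)"
  proof -
    have "(\<Sum>k\<le>m. d k * (if i = k then 1 else 0)) = (\<Sum>k\<le>m. if i = k then d k else 0)"
      by (rule sum.cong) auto
    then show ?thesis
      by (simp add: fps_sum_nth)
  qed
  ultimately show ?thesis
    by (auto simp: field_simps)
qed

lemma laguerre_eq_polyfun:
  "laguerre n b = (\<lambda>z. \<Sum>k\<le>n. (pochhammer (b + of_nat k + 1) (n - k) / fact (n - k) * (-1) ^ k / fact k) * z ^ k)"
  unfolding laguerre_def fun_eq_iff
proof (intro allI sum.cong refl)
  fix z k
  show "pochhammer (b + of_nat k + 1) (n - k) / fact (n - k) * (- z) ^ k / fact k =
      pochhammer (b + of_nat k + 1) (n - k) / fact (n - k) * (- 1) ^ k / fact k * z ^ k"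
    by (subst power_minus) simp
qed

lemma laguerre_minus_eq_polyfun:
  "(\<lambda>y. laguerre n b (- y)) = (\<lambda>z. \<Sum>k\<le>n. (pochhammer (b + of_nat k + 1) (n - k) / fact (n - k) / fact k) * z ^ k)"
  unfolding laguerre_def fun_eq_iff by simp

lemma holomorphic_laguerre: "laguerre n b holomorphic_on S"
  unfolding laguerre_eq_polyfun by (rule holomorphic_on_polyfun)

lemma holomorphic_laguerre_minus: "(\<lambda>y. laguerre n b (- y)) holomorphic_on S"
  unfolding laguerre_minus_eq_polyfun by (rule holomorphic_on_polyfun)

lemma holomorphic_exp_laguerre_minus: "(\<lambda>y. exp y * laguerre n b (- y)) holomorphic_on S"
  using holomorphic_laguerre_minus by (intro holomorphic_on_mult holomorphic_on_exp)

definition kummer_fps :: "complex \<Rightarrow> complex \<Rightarrow> complex fps" where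
  "kummer_fps c b = Abs_fps (\<lambda>k. pochhammer c k / pochhammer b k / fact k)"

lemma kummerM_eq_eval_fps: "kummerM c b = eval_fps (kummer_fps c b)"
  unfolding kummerM_def eval_fps_def[abs_def] kummer_fps_def fun_eq_iff
  by (simp add: field_simps)

lemma kummer_fps_nth_Suc:
  "fps_nth (kummer_fps c b) (Suc n) =
    fps_nth (kummer_fps c b) n * ((c + of_nat n) / ((b + of_nat n) * (of_nat n + 1)))"
  by (simp add: kummer_fps_def pochhammer_Suc field_simps)

lemma norm_kummer_ratio_le:
  fixes b c :: complex
  assumes "real n > norm b"
  shows "norm ((c + of_nat n) / ((b + of_nat n) * (of_nat n + 1))) \<le>
    (norm c + real n) / ((real n - norm b) * (real n + 1))"
proof -
  have "norm (c + of_nat n) \<le> norm c + real n"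
    using norm_triangle_ineq[of c "of_nat n"] by simp
  moreover have "(real n - norm b) * (real n + 1) \<le> norm (b + of_nat n) * (real n + 1)"
    using norm_triangle_ineq4[of "b + of_nat n" b] by (intro mult_right_mono) auto
  moreover have "0 < (real n - norm b) * (real n + 1)"
    using assms by simp
  ultimately have "norm (c + of_nat n) / (norm (b + of_nat n) * (real n + 1)) \<le>
      (norm c + real n) / ((real n - norm b) * (real n + 1))"
    by (intro frac_le) auto
  also have "norm (c + of_nat n) / (norm (b + of_nat n) * (real n + 1)) =
      norm ((c + of_nat n) / ((b + of_nat n) * (of_nat n + 1)))"
    using norm_of_nat[of "Suc n", where 'a = complex]
    by (simp add: norm_divide norm_mult add.commute)
  finally show ?thesis .
qed

lemma fps_conv_radius_kummer_fps: "fps_conv_radius (kummer_fps c b) = \<infinity>"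
proof -
  let ?h = "fps_nth (kummer_fps c b)"
  let ?ratio = "\<lambda>n. norm ((c + of_nat n) / ((b + of_nat n) * (of_nat n + 1)))"
  have "conv_radius ?h \<ge> \<infinity>"
  proof (rule conv_radius_geI_ex')
    fix r :: real assume r: "0 < r"
    let ?bound = "\<lambda>n. r * ((norm c + real n) / ((real n - norm b) * (real n + 1)))"
    have "?bound \<longlonglongrightarrow> 0"
      by real_asymp
    then have "eventually (\<lambda>n. ?bound n < 1/2) sequentially"
      by (rule order_tendstoD) simp
    moreover have "eventually (\<lambda>n. real n > norm b) sequentially"
      by real_asymp
    ultimately have "eventually (\<lambda>n. r * ?ratio n \<le> 1/2) sequentially"
    proof eventually_elim
      case (elim n)
      then show ?case
        using norm_kummer_ratio_le[of b n c] r by (smt (verit) mult_left_mono)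
    qed
    then obtain N where N: "\<And>n. n \<ge> N \<Longrightarrow> r * ?ratio n \<le> 1/2"
      unfolding eventually_sequentially by blast
    show "summable (\<lambda>n. ?h n * of_real r ^ n)"
    proof (rule summable_ratio_test[of "1/2" N])
      fix n assume "N \<le> n"
      have "norm (?h (Suc n) * of_real r ^ Suc n) = norm (?h n * of_real r ^ n) * (r * ?ratio n)"
        unfolding kummer_fps_nth_Suc using r by (simp add: norm_mult norm_power norm_divide abs_of_pos mult_ac)
      also have "\<dots> \<le> norm (?h n * of_real r ^ n) * (1/2)"
        using N[OF \<open>N \<le> n\<close>] by (rule mult_left_mono) simp
      finally show "norm (?h (Suc n) * of_real r ^ Suc n) \<le> 1/2 * norm (?h n * of_real r ^ n)"
        by (simp add: mult.commute)
    qed simp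
  qed
  then show ?thesis
    by (simp add: fps_conv_radius_def)
qed

lemma holomorphic_kummerM: "kummerM c b holomorphic_on S"
  unfolding kummerM_eq_eval_fps
  by (rule holomorphic_on_eval_fps) (simp add: fps_conv_radius_kummer_fps)

lemma higher_deriv_kummerM_0: "(deriv ^^ i) (kummerM c b) 0 = pochhammer c i / pochhammer b i"
proof -
  have "kummerM c b has_fps_expansion kummer_fps c b"
    unfolding kummerM_eq_eval_fps
    by (rule eval_fps_has_fps_expansion) (simp add: fps_conv_radius_kummer_fps)
  from fps_nth_fps_expansion[OF this, of i] show ?thesis
    by (simp add: kummer_fps_def field_simps)
qed

lemma higher_deriv_exp: "(deriv ^^ j) exp = (exp :: complex \<Rightarrow> complex)"
proof -
  have "deriv exp = (exp :: complex \<Rightarrow> complex)"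
    by (rule ext, rule DERIV_imp_deriv, rule DERIV_exp)
  then show ?thesis
    by (induction j) simp_all
qed

lemma pochhammer_minus_of_nat:
  assumes "k \<le> n"
  shows "pochhammer (- of_nat n :: 'a::field_char_0) k = (-1) ^ k * fact n / fact (n - k)"
proof -
  have "pochhammer (- of_nat n :: 'a) k = (-1) ^ k * pochhammer (of_nat (n - k) + 1) k"
    using pochhammer_minus[of "of_nat n :: 'a" k] assms by simp
  moreover have "fact n = fact (n - k) * pochhammer (of_nat (n - k) + 1 :: 'a) k"
    using pochhammer_product[of "n - k" n "1 :: 'a"] assms by (simp add: pochhammer_fact add.commute)
  ultimately show ?thesis
    by (simp add: field_simps)
qed

text \<open>Here \<open>(-1)^k * pochhammer (- of_nat n) k\<close> is the falling factorial \<open>n (n-1) \<dots> (n-k+1)\<close>.\<close>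

lemma pochhammer_binomial_sum_falling:
  fixes \<beta> :: "'a::comm_ring_1"
  shows "(\<Sum>k\<le>i. of_nat (i choose k) * ((-1) ^ k * pochhammer (- of_nat n) k) * pochhammer (\<beta> + of_nat k) (i - k))
     = pochhammer (\<beta> + of_nat n) i"
proof -
  define \<gamma> where "\<gamma> = \<beta> + of_nat i - 1"
  have reflect: "pochhammer (\<beta> + of_nat k) (i - k) = (-1) ^ (i - k) * pochhammer (- \<gamma>) (i - k)"
    if "k \<le> i" for k
  proof -
    have "\<gamma> - of_nat (i - k) + 1 = \<beta> + of_nat k"
      using that by (simp add: \<gamma>_def)
    then show ?thesis
      using pochhammer_minus'[of \<gamma> "i - k"] by simp
  qed
  have "(\<Sum>k\<le>i. of_nat (i choose k) * ((-1) ^ k * pochhammer (- of_nat n) k) * pochhammer (\<beta> + of_nat k) (i - k))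
      = (\<Sum>k\<le>i. (-1) ^ i * (of_nat (i choose k) * pochhammer (- of_nat n) k * pochhammer (- \<gamma>) (i - k)))"
  proof (rule sum.cong[OF refl])
    fix k assume "k \<in> {..i}"
    then have k: "k \<le> i" by simp
    have sign: "(-1::'a) ^ k * (-1) ^ (i - k) = (-1) ^ i"
      using k by (simp add: power_add[symmetric])
    show "of_nat (i choose k) * ((-1) ^ k * pochhammer (- of_nat n) k) * pochhammer (\<beta> + of_nat k) (i - k) =
        (-1) ^ i * (of_nat (i choose k) * pochhammer (- of_nat n) k * pochhammer (- \<gamma>) (i - k))"
      unfolding reflect[OF k] sign[symmetric] by (simp only: ac_simps)
  qed
  also have "\<dots> = (-1) ^ i * pochhammer (- of_nat n + - \<gamma>) i"
    by (simp only: sum_distrib_left[symmetric] pochhammer_binomial_sum)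
  also have "\<dots> = pochhammer (\<beta> + of_nat n) i"
  proof -
    have "pochhammer (\<beta> + of_nat n) i = pochhammer ((\<gamma> + of_nat n) - of_nat i + 1) i"
      by (simp add: \<gamma>_def algebra_simps)
    also have "\<dots> = (-1) ^ i * pochhammer (- (\<gamma> + of_nat n)) i"
      by (rule pochhammer_minus')
    finally show ?thesis
      by (simp add: algebra_simps)
  qed
  finally show ?thesis .
qed

lemma higher_deriv_laguerre_0:
  assumes "pochhammer (b + 1) i \<noteq> 0"
  shows "(deriv ^^ i) (laguerre n b) 0 =
    pochhammer (b + 1) n / fact n * pochhammer (- of_nat n) i / pochhammer (b + 1) i"
proof (cases "i \<le> n")
  case True
  have "(deriv ^^ i) (laguerre n b) 0 =
      fact i * (pochhammer (b + of_nat i + 1) (n - i) / fact (n - i) * (-1) ^ i / fact i)"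
    unfolding laguerre_eq_polyfun higher_deriv_polyfun_0 using True by simp
  moreover have "pochhammer (b + 1) n = pochhammer (b + 1) i * pochhammer (b + of_nat i + 1) (n - i)"
    using pochhammer_product[OF True, of "b + 1"] by (simp add: algebra_simps)
  ultimately show ?thesis
    using assms by (simp add: pochhammer_minus_of_nat[OF True] field_simps)
next
  case False
  then show ?thesis
    unfolding laguerre_eq_polyfun higher_deriv_polyfun_0 by (simp add: pochhammer_of_nat_eq_0_iff)
qed

lemma higher_deriv_laguerre_minus_0:
  "(deriv ^^ k) (\<lambda>y. laguerre n b (- y)) 0 =
    (if k \<le> n then pochhammer (b + of_nat k + 1) (n - k) / fact (n - k) else 0)"
  unfolding laguerre_minus_eq_polyfun higher_deriv_polyfun_0 by simp

lemma pochhammer_div_fact_eq_falling: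
  fixes \<beta> :: "'a::field_char_0"
  assumes "k \<le> i" "k \<le> n" "pochhammer \<beta> i \<noteq> 0"
  shows "pochhammer (\<beta> + of_nat k) (n - k) / fact (n - k) =
    pochhammer \<beta> n / fact n / pochhammer \<beta> i *
    ((-1) ^ k * pochhammer (- of_nat n) k) * pochhammer (\<beta> + of_nat k) (i - k)"
proof -
  have i_split: "pochhammer \<beta> i = pochhammer \<beta> k * pochhammer (\<beta> + of_nat k) (i - k)"
    using pochhammer_product[OF assms(1)] .
  have n_split: "pochhammer \<beta> n = pochhammer \<beta> k * pochhammer (\<beta> + of_nat k) (n - k)"
    using pochhammer_product[OF assms(2)] .
  have "pochhammer \<beta> k \<noteq> 0" "pochhammer (\<beta> + of_nat k) (i - k) \<noteq> 0"
    using assms(3) i_split by auto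
  moreover have "(-1::'a) ^ k * (-1) ^ k = 1"
    by (simp flip: power_add)
  ultimately show ?thesis
    unfolding i_split n_split pochhammer_minus_of_nat[OF assms(2)] by (simp add: field_simps)
qed

lemma higher_deriv_exp_laguerre_minus_0:
  assumes "pochhammer (b + 1) i \<noteq> 0"
  shows "(deriv ^^ i) (\<lambda>y. exp y * laguerre n b (- y)) 0 =
    pochhammer (b + 1) n / fact n * pochhammer (b + 1 + of_nat n) i / pochhammer (b + 1) i"
proof -
  define \<beta> where "\<beta> = b + 1"
  define C where "C = pochhammer \<beta> n / fact n / pochhammer \<beta> i"
  have "(deriv ^^ i) (\<lambda>y. exp y * laguerre n b (- y)) 0 = (deriv ^^ i) (\<lambda>y. laguerre n b (- y) * exp y) 0"
    by (simp add: mult.commute)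
  also have "\<dots> = (\<Sum>k = 0..i. of_nat (i choose k) * (deriv ^^ k) (\<lambda>y. laguerre n b (- y)) 0 * (deriv ^^ (i - k)) exp 0)"
    by (rule higher_deriv_mult[of _ UNIV]) (simp_all add: holomorphic_laguerre_minus holomorphic_on_exp)
  also have "\<dots> = (\<Sum>k\<le>i. of_nat (i choose k) * ((-1) ^ k * pochhammer (- of_nat n) k) *
      pochhammer (\<beta> + of_nat k) (i - k)) * C"
    unfolding sum_distrib_right atLeast0AtMost higher_deriv_laguerre_minus_0 higher_deriv_exp
  proof (rule sum.cong)
    fix k assume "k \<in> {..i}"
    then show "of_nat (i choose k) * (if k \<le> n then pochhammer (b + of_nat k + 1) (n - k) / fact (n - k) else 0) *
        exp 0 = of_nat (i choose k) * ((-1) ^ k * pochhammer (- of_nat n) k) * pochhammer (\<beta> + of_nat k) (i - k) * C"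
      using pochhammer_div_fact_eq_falling[of k i n \<beta>] assms
      by (auto simp: C_def \<beta>_def pochhammer_of_nat_eq_0_iff add_ac mult_ac)
  qed simp
  also have "\<dots> = pochhammer (\<beta> + of_nat n) i * C"
    by (simp only: pochhammer_binomial_sum_falling)
  finally show ?thesis
    by (simp add: C_def \<beta>_def field_simps)
qed

section \<open>Vandermonde products\<close>

lemma prod_list_map_conv_prod_nth: "prod_list (map f xs) = (\<Prod>i<length xs. f (xs ! i))"
  by (simp add: prod.list_conv_set_nth atLeast0LessThan)

lemma vandermonde_snoc:
  "vandermonde (xs @ [x]) = vandermonde xs * prod_list (map (\<lambda>z. x - z) xs)"
proof -
  let ?n = "length xs"
  have "vandermonde (xs @ [x]) = (\<Prod>j<?n. \<Prod>i<j. ((xs @ [x]) ! j - (xs @ [x]) ! i)) *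
      (\<Prod>i<?n. ((xs @ [x]) ! ?n - (xs @ [x]) ! i))"
    by (simp add: vandermonde_def)
  also have "(\<Prod>j<?n. \<Prod>i<j. ((xs @ [x]) ! j - (xs @ [x]) ! i)) = vandermonde xs"
    unfolding vandermonde_def by (intro prod.cong refl) (auto simp: nth_append)
  also have "(\<Prod>i<?n. ((xs @ [x]) ! ?n - (xs @ [x]) ! i)) = prod_list (map (\<lambda>z. x - z) xs)"
    unfolding prod_list_map_conv_prod_nth by (intro prod.cong refl) (auto simp: nth_append)
  finally show ?thesis .
qed

lemma vandermonde_Cons:
  "vandermonde (x # xs) = vandermonde xs * prod_list (map (\<lambda>z. z - x) xs)"
proof -
  have "vandermonde (x # xs) = (\<Prod>j<length xs. (xs ! j - x) * (\<Prod>i<j. (xs ! j - xs ! i)))"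
    unfolding vandermonde_def by (simp add: prod.lessThan_Suc_shift del: prod.lessThan_Suc)
  then show ?thesis
    by (simp add: prod.distrib vandermonde_def prod_list_map_conv_prod_nth mult.commute)
qed

lemma prod_list_map_diff_swap:
  "prod_list (map (\<lambda>z. z - x) xs) = (-1) ^ length xs * prod_list (map (\<lambda>z. x - z) xs :: complex list)"
  by (induction xs) (auto simp: algebra_simps)

lemma vandermonde_rev: "\<exists>\<sigma>\<in>{1, -1::complex}. vandermonde (rev xs) = \<sigma> * vandermonde xs"
proof (induction xs)
  case (Cons x xs)
  then obtain \<sigma> where \<sigma>: "\<sigma> \<in> {1, -1}" "vandermonde (rev xs) = \<sigma> * vandermonde xs"
    by blast
  have "vandermonde (rev (x # xs)) = \<sigma> * vandermonde xs * prod_list (map (\<lambda>z. x - z) xs)"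
    by (simp add: vandermonde_snoc \<sigma>(2) flip: rev_map)
  also have "\<dots> = (\<sigma> * (-1) ^ length xs) * vandermonde (x # xs)"
    by (simp add: vandermonde_Cons prod_list_map_diff_swap mult_ac flip: power_add mult_2)
  finally show ?case
    using \<sigma>(1) by (auto simp: minus_one_power_iff)
qed simp

lemma vandermonde_rev_append:
  "\<exists>\<sigma>\<in>{1, -1::complex}. vandermonde (rev xs @ ys) = \<sigma> * vandermonde (xs @ ys)"
proof (induction ys rule: rev_induct)
  case Nil
  then show ?case
    using vandermonde_rev[of xs] by simp
next
  case (snoc y ys)
  then obtain \<sigma> where \<sigma>: "\<sigma> \<in> {1, -1}" "vandermonde (rev xs @ ys) = \<sigma> * vandermonde (xs @ ys)"
    by blast
  have "prod_list (map (\<lambda>z. y - z) (rev xs @ ys)) = prod_list (map (\<lambda>z. y - z) (xs @ ys))"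
    by (simp flip: rev_map)
  then have "vandermonde (rev xs @ ys @ [y]) = \<sigma> * vandermonde (xs @ ys @ [y])"
    using vandermonde_snoc[of "rev xs @ ys" y] vandermonde_snoc[of "xs @ ys" y] \<sigma>(2) by simp
  then show ?case
    using \<sigma>(1) by auto
qed

section \<open>Splitting the Pochhammer products at r\<close>

lemma split_idx_spec:
  fixes ns :: "nat list" and r :: nat
  assumes "sorted_wrt (>) ns"
  defines "s \<equiv> split_idx ns r"
  shows "1 \<le> s" "s \<le> length ns + 1"
    "\<forall>i\<in>{s..length ns}. ns ! (i - 1) < r" "\<forall>i\<in>{1..<s}. ns ! (i - 1) \<ge> r"
proof -
  define P where "P s \<longleftrightarrow> 1 \<le> s \<and> (\<forall>i\<in>{s..length ns}. ns ! (i - 1) < r) \<and> (\<forall>i\<in>{1..<s}. ns ! (i - 1) \<ge> r)"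
    for s
  define s0 where "s0 = length (takeWhile (\<lambda>x. x \<ge> r) ns) + 1"
  have "s0 \<le> length ns + 1"
    unfolding s0_def using length_takeWhile_le[of "\<lambda>x. x \<ge> r" ns] by simp
  moreover have "P s0"
    unfolding P_def
  proof (intro conjI ballI)
    fix i assume "i \<in> {1..<s0}"
    then have "i - 1 < length (takeWhile (\<lambda>x. x \<ge> r) ns)"
      unfolding s0_def by auto
    then show "ns ! (i - 1) \<ge> r"
      by (metis nth_mem set_takeWhileD takeWhile_nth)
  next
    fix i assume i: "i \<in> {s0..length ns}"
    then have "length (takeWhile (\<lambda>x. x \<ge> r) ns) < length ns"
      unfolding s0_def by auto
    then have first: "ns ! (s0 - 1) < r"
      using nth_length_takeWhile unfolding s0_def by fastforce
    show "ns ! (i - 1) < r"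
    proof (cases "i = s0")
      case False
      then have "ns ! (s0 - 1) > ns ! (i - 1)"
        using i sorted_wrt_nth_less[OF assms(1)] unfolding s0_def by auto
      then show ?thesis
        using first by simp
    qed (use first in simp)
  qed (simp add: s0_def)
  moreover have "s = (LEAST s. P s)"
    using \<open>P s0\<close> unfolding s_def split_idx_def P_def by auto
  ultimately have "P s" "s \<le> length ns + 1"
    using LeastI[of P s0] Least_le[of P s0] by auto
  then show "1 \<le> s" "s \<le> length ns + 1"
    "\<forall>i\<in>{s..length ns}. ns ! (i - 1) < r" "\<forall>i\<in>{1..<s}. ns ! (i - 1) \<ge> r"
    unfolding P_def by auto
qed

lemma prod_pochhammer_split_at:
  fixes \<beta> :: "'a::comm_ring_1"
  assumes "1 \<le> s" "s \<le> length ds + 1"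
    and below: "\<forall>i\<in>{s..length ds}. ds ! (i - 1) < r" and above: "\<forall>i\<in>{1..<s}. ds ! (i - 1) \<ge> r"
  shows "(\<Prod>j<length ds. pochhammer \<beta> (ds ! j)) *
      (\<Prod>j=s..length ds. pochhammer (\<beta> + of_nat (ds ! (j - 1))) (r - ds ! (j - 1))) =
    pochhammer \<beta> r ^ length ds * (\<Prod>j=1..s-1. pochhammer (\<beta> + of_nat r) (ds ! (j - 1) - r))"
proof -
  let ?n = "length ds"
  let ?R = "pochhammer \<beta> r"
  let ?f = "\<lambda>j. pochhammer \<beta> (ds ! (j - 1))"
  let ?P = "\<lambda>j. pochhammer (\<beta> + of_nat r) (ds ! (j - 1) - r)"
  let ?Q = "\<lambda>j. pochhammer (\<beta> + of_nat (ds ! (j - 1))) (r - ds ! (j - 1))"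
  have "(\<Prod>j<?n. pochhammer \<beta> (ds ! j)) = (\<Prod>j=1..?n. ?f j)"
    by (simp add: prod.atLeast1_atMost_eq)
  also have "{1..?n} = {1..s-1} \<union> {s..?n}"
    using assms(1,2) by auto
  also have "(\<Prod>j\<in>{1..s-1} \<union> {s..?n}. ?f j) = (\<Prod>j=1..s-1. ?f j) * (\<Prod>j=s..?n. ?f j)"
    by (rule prod.union_disjoint) auto
  finally have split: "(\<Prod>j<?n. pochhammer \<beta> (ds ! j)) = (\<Prod>j=1..s-1. ?f j) * (\<Prod>j=s..?n. ?f j)" .
  have "(\<Prod>j=1..s-1. ?f j) = (\<Prod>j=1..s-1. ?R * ?P j)"
    using above by (intro prod.cong refl pochhammer_product) auto
  then have low: "(\<Prod>j=1..s-1. ?f j) = ?R ^ (s - 1) * (\<Prod>j=1..s-1. ?P j)"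
    by (simp add: prod.distrib)
  have "(\<Prod>j=s..?n. ?f j) * (\<Prod>j=s..?n. ?Q j) = (\<Prod>j=s..?n. ?R)"
    unfolding prod.distrib[symmetric]
    using below by (intro prod.cong refl pochhammer_product[symmetric]) (auto intro!: less_imp_le)
  then have high: "(\<Prod>j=s..?n. ?f j) * (\<Prod>j=s..?n. ?Q j) = ?R ^ (?n + 1 - s)"
    by simp
  have "(\<Prod>j<?n. pochhammer \<beta> (ds ! j)) * (\<Prod>j=s..?n. ?Q j) =
      (\<Prod>j=1..s-1. ?f j) * ((\<Prod>j=s..?n. ?f j) * (\<Prod>j=s..?n. ?Q j))"
    unfolding split by (simp only: mult.assoc)
  also have "\<dots> = ?R ^ (s - 1) * ?R ^ (?n + 1 - s) * (\<Prod>j=1..s-1. ?P j)"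
    unfolding low high by (simp only: ac_simps)
  also have "?R ^ (s - 1) * ?R ^ (?n + 1 - s) = ?R ^ ?n"
    using assms(1,2) by (simp flip: power_add)
  finally show ?thesis .
qed

lemma prod_pochhammer_div_fact_split_idx:
  fixes \<beta> :: "'a::field_char_0" and r :: nat
  assumes "sorted_wrt (>) ds" and nonzero: "\<And>d k. pochhammer (\<beta> + of_nat d) k \<noteq> 0"
  defines "s \<equiv> split_idx ds r"
  shows "(\<Prod>j<length ds. pochhammer \<beta> (ds ! j) / fact (ds ! j)) =
    pochhammer \<beta> r ^ length ds * (\<Prod>j=1..s-1. pochhammer (\<beta> + of_nat r) (ds ! (j - 1) - r)) /
    ((\<Prod>j=s..length ds. pochhammer (\<beta> + of_nat (ds ! (j - 1))) (r - ds ! (j - 1))) * (\<Prod>j<length ds. fact (ds ! j)))"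
proof -
  have "(\<Prod>j<length ds. pochhammer \<beta> (ds ! j)) *
      (\<Prod>j=s..length ds. pochhammer (\<beta> + of_nat (ds ! (j - 1))) (r - ds ! (j - 1))) =
    pochhammer \<beta> r ^ length ds * (\<Prod>j=1..s-1. pochhammer (\<beta> + of_nat r) (ds ! (j - 1) - r))"
    unfolding s_def by (rule prod_pochhammer_split_at[OF split_idx_spec[OF assms(1)]])
  moreover have "(\<Prod>j=s..length ds. pochhammer (\<beta> + of_nat (ds ! (j - 1))) (r - ds ! (j - 1))) \<noteq> 0"
    by (simp add: nonzero)
  ultimately show ?thesis
    by (simp add: prod_dividef field_simps)
qed

lemma prod_pochhammer_staircase:
  fixes \<beta> :: "'a::comm_ring_1"
  shows "(\<Prod>k=1..r+1. pochhammer (\<beta> - 1 + of_nat k) (r + 1 - k)) * (\<Prod>i<r+1. pochhammer \<beta> i) =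
    pochhammer \<beta> r ^ (r + 1)"
proof -
  have "(\<Prod>k=1..r+1. pochhammer (\<beta> - 1 + of_nat k) (r + 1 - k)) * (\<Prod>i<r+1. pochhammer \<beta> i) =
      (\<Prod>i<r+1. pochhammer \<beta> i * pochhammer (\<beta> + of_nat i) (r - i))"
    by (simp add: prod.atLeast1_atMost_eq prod.distrib mult_ac)
  also have "\<dots> = (\<Prod>i<r+1. pochhammer \<beta> r)"
    by (intro prod.cong refl pochhammer_product[symmetric]) auto
  finally show ?thesis
    by simp
qed

section \<open>The function G at the origin\<close>

lemma pochhammer_1_minus_of_real_neq_0:
  assumes "\<forall>k::nat. \<alpha> \<noteq> of_nat (Suc k)"
  shows "pochhammer (1 - complex_of_real \<alpha> + of_nat d) k \<noteq> 0"
proof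
  assume "pochhammer (1 - complex_of_real \<alpha> + of_nat d) k = 0"
  then obtain j where "1 - complex_of_real \<alpha> + of_nat d = - of_nat j"
    by (auto simp: pochhammer_eq_0_iff)
  then have "Re (1 - complex_of_real \<alpha> + of_nat d) = Re (- of_nat j)"
    by simp
  then have "\<alpha> = of_nat (Suc (d + j))"
    by simp
  with assms show False
    by blast
qed

lemma powr_mult_of_nat_cancel:
  fixes x a :: complex
  assumes "x \<noteq> 0"
  shows "x powr (a * of_nat N) * (x powr (- a)) ^ N = 1"
proof -
  have "(x powr (- a)) ^ N = exp (- a * ln x) ^ N"
    using assms by (simp add: powr_def)
  also have "\<dots> = exp (of_nat N * (- a * ln x))"
    by (rule exp_of_nat_mult[symmetric])
  finally have "(x powr (- a)) ^ N = exp (of_nat N * (- a * ln x))" .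
  moreover have "x powr (a * of_nat N) = exp (a * of_nat N * ln x)"
    using assms by (simp add: powr_def)
  ultimately show ?thesis
    by (simp add: exp_add[symmetric] algebra_simps)
qed

text \<open>The columns of the Wronskian in \<open>G_fun\<close> with the common factor \<open>x powr (- a)\<close> removed,
  and the nodes and weights describing their Taylor coefficients at 0.\<close>

definition G_columns :: "complex \<Rightarrow> complex \<Rightarrow> nat list \<Rightarrow> nat list \<Rightarrow> (complex \<Rightarrow> complex) list" where
  "G_columns a lam ns ms =
     map (\<lambda>m. laguerre m (- a)) ms @ map (\<lambda>n y. exp y * laguerre n (- a) (- y)) ns @
     [kummerM (- lam - a) (1 - a)]"

definition G_nodes :: "complex \<Rightarrow> complex \<Rightarrow> nat list \<Rightarrow> nat list \<Rightarrow> complex list" where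
  "G_nodes a lam ns ms = map (\<lambda>m. - of_nat m) ms @ map (\<lambda>n. - a + 1 + of_nat n) ns @ [- lam - a]"

definition G_weights :: "complex \<Rightarrow> nat list \<Rightarrow> nat list \<Rightarrow> complex list" where
  "G_weights a ns ms = map (\<lambda>m. pochhammer (1 - a) m / fact m) (ms @ ns) @ [1]"

lemma length_G_columns: "length (G_columns a lam ns ms) = length ns + length ms + 1"
  by (simp add: G_columns_def)

lemma length_G_nodes: "length (G_nodes a lam ns ms) = length ns + length ms + 1"
  by (simp add: G_nodes_def)

lemma length_G_weights: "length (G_weights a ns ms) = length ns + length ms + 1"
  by (simp add: G_weights_def)

lemma holomorphic_G_columns: "f \<in> set (G_columns a lam ns ms) \<Longrightarrow> f holomorphic_on S"
  unfolding G_columns_def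
  using holomorphic_laguerre holomorphic_exp_laguerre_minus holomorphic_kummerM by auto

lemma G_fun_eq_wronskian_G_columns:
  assumes "0 < Re x"
  shows "G_fun \<alpha> lam ns ms x =
    exp (- of_nat (length ns) * x) * wronskian (G_columns (of_real \<alpha>) lam ns ms) x"
proof -
  define a where "a = complex_of_real \<alpha>"
  define N where "N = length ns + length ms + 1"
  define S where "S = {z::complex. 0 < Re z}"
  define g where "g = (\<lambda>y::complex. y powr (- a))"
  have columns: "map (\<lambda>m y. y powr (- a) * laguerre m (- a) y) ms @
      map (\<lambda>n y. exp y * y powr (- a) * laguerre n (- a) (- y)) ns @
      [\<lambda>y. y powr (- a) * kummerM (- lam - a) (1 - a) y] =
      map (\<lambda>f y. g y * f y) (G_columns a lam ns ms)"
    by (simp add: G_columns_def g_def fun_eq_iff mult_ac)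
  have "g holomorphic_on S"
    unfolding g_def S_def
    by (rule holomorphic_on_powr[of "\<lambda>y. y" _ "\<lambda>_. - a", simplified])
       (auto simp: holomorphic_on_ident complex_nonpos_Reals_iff)
  then have factor: "wronskian (map (\<lambda>f y. g y * f y) (G_columns a lam ns ms)) x =
      g x ^ N * wronskian (G_columns a lam ns ms) x"
    using wronskian_map_mult_left[of S x g "G_columns a lam ns ms"] assms holomorphic_G_columns
    by (simp add: S_def N_def length_G_columns open_halfspace_Re_gt)
  have cancel: "x powr (a * of_nat N) * g x ^ N = 1"
    using assms unfolding g_def by (intro powr_mult_of_nat_cancel) auto
  have "G_fun \<alpha> lam ns ms x = exp (- of_nat (length ns) * x) * x powr (a * of_nat N) *
      wronskian (map (\<lambda>f y. g y * f y) (G_columns a lam ns ms)) x"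
    unfolding G_fun_def Let_def a_def[symmetric] columns N_def by (simp add: ac_simps)
  also have "\<dots> = exp (- of_nat (length ns) * x) * (x powr (a * of_nat N) * g x ^ N) *
      wronskian (G_columns a lam ns ms) x"
    unfolding factor by (simp only: mult.assoc)
  finally show ?thesis
    unfolding cancel a_def[symmetric] by simp
qed

lemma tendsto_G_fun_0:
  "(G_fun \<alpha> lam ns ms \<longlongrightarrow> wronskian (G_columns (of_real \<alpha>) lam ns ms) 0) (at 0 within {z. 0 < Re z})"
proof -
  define W where "W x = exp (- of_nat (length ns) * x) * wronskian (G_columns (of_real \<alpha>) lam ns ms) x" for x
  have "isCont W 0"
    unfolding W_def by (intro continuous_intros isCont_wronskian ballI holomorphic_G_columns)
  then have "continuous (at 0 within {z. 0 < Re z}) W"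
    by (rule continuous_at_imp_continuous_within)
  then have "(W \<longlongrightarrow> wronskian (G_columns (of_real \<alpha>) lam ns ms) 0) (at 0 within {z. 0 < Re z})"
    unfolding continuous_within by (simp add: W_def)
  moreover have "eventually (\<lambda>x. W x = G_fun \<alpha> lam ns ms x) (at 0 within {z. 0 < Re z})"
    unfolding eventually_at_filter W_def
    by (auto intro!: always_eventually simp: G_fun_eq_wronskian_G_columns)
  ultimately show ?thesis
    by (rule Lim_transform_eventually)
qed

lemma higher_deriv_G_columns_0:
  assumes "pochhammer (1 - a) i \<noteq> 0" and "j < length ns + length ms + 1"
  shows "(deriv ^^ i) (G_columns a lam ns ms ! j) 0 =
    G_weights a ns ms ! j * pochhammer (G_nodes a lam ns ms ! j) i / pochhammer (1 - a) i"
proof -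
  have shift: "- a + 1 = 1 - a"
    by simp
  consider (laguerre) "j < length ms"
    | (exp_laguerre) "length ms \<le> j" "j < length ms + length ns"
    | (kummer) "j = length ms + length ns"
    using assms(2) by linarith
  then show ?thesis
  proof cases
    case laguerre
    then show ?thesis
      using higher_deriv_laguerre_0[of "- a", unfolded shift, OF assms(1), of "ms ! j"]
      by (simp add: G_columns_def G_nodes_def G_weights_def nth_append)
  next
    case exp_laguerre
    then have "j - length ms < length ns"
      by linarith
    with exp_laguerre show ?thesis
      using higher_deriv_exp_laguerre_minus_0[of "- a", unfolded shift, OF assms(1), of "ns ! (j - length ms)"]
      by (simp add: G_columns_def G_nodes_def G_weights_def nth_append shift)
  next
    case kummer
    then show ?thesis
      by (simp add: G_columns_def G_nodes_def G_weights_def nth_append higher_deriv_kummerM_0)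
  qed
qed

lemma wronskian_G_columns_0:
  assumes "\<And>i. pochhammer (1 - a) i \<noteq> 0"
  shows "wronskian (G_columns a lam ns ms) 0 =
    prod_list (G_weights a ns ms) * vandermonde (G_nodes a lam ns ms) /
    (\<Prod>i<length ns + length ms + 1. pochhammer (1 - a) i)"
proof -
  define N where "N = length ns + length ms + 1"
  define w where "w = G_weights a ns ms"
  define c where "c = G_nodes a lam ns ms"
  have "wronskian (G_columns a lam ns ms) 0 = det (mat N N (\<lambda>(i,j). (deriv ^^ i) (G_columns a lam ns ms ! j) 0))"
    by (simp add: wronskian_eq_det N_def length_G_columns)
  also have "mat N N (\<lambda>(i,j). (deriv ^^ i) (G_columns a lam ns ms ! j) 0) =
      mat N N (\<lambda>(i,j). inverse (pochhammer (1 - a) i) * (w ! j) * pochhammer (c ! j) i)"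
    by (rule eq_matI) (auto simp: N_def w_def c_def higher_deriv_G_columns_0 assms divide_inverse mult_ac)
  also have "det \<dots> = (\<Prod>i<N. inverse (pochhammer (1 - a) i)) * (\<Prod>j<N. w ! j) *
      (\<Prod>j<N. \<Prod>i<j. c ! j - c ! i)"
    unfolding det_mat_scale_rows_cols det_mat_pochhammer ..
  also have "(\<Prod>i<N. inverse (pochhammer (1 - a) i)) = inverse (\<Prod>i<N. pochhammer (1 - a) i)"
    using prod_inversef[of "pochhammer (1 - a)" "{..<N}"] by (simp add: comp_def)
  also have "(\<Prod>j<N. w ! j) = prod_list w"
    using prod_list_map_conv_prod_nth[of "\<lambda>x. x" w] by (simp add: w_def N_def length_G_weights)
  also have "(\<Prod>j<N. \<Prod>i<j. c ! j - c ! i) = vandermonde c"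
    by (simp add: vandermonde_def c_def N_def length_G_nodes)
  finally show ?thesis
    unfolding N_def w_def c_def by (simp only: divide_inverse ac_simps)
qed

lemma vandermonde_G0_nodes:
  "\<exists>\<sigma>\<in>{1, -1::complex}.
    vandermonde (map (\<lambda>m. - of_nat m) (rev ms) @ map (\<lambda>n. - a + 1 + of_nat n) ns @ [- lam - a]) =
    \<sigma> * vandermonde (G_nodes a lam ns ms)"
proof -
  let ?xs = "map (\<lambda>m. - of_nat m) ms :: complex list"
  let ?ys = "map (\<lambda>n. - a + 1 + of_nat n) ns @ [- lam - a]"
  have "map (\<lambda>m. - of_nat m) (rev ms) = rev ?xs" and "G_nodes a lam ns ms = ?xs @ ?ys"
    by (simp_all add: rev_map G_nodes_def)
  then show ?thesis
    using vandermonde_rev_append[of ?xs ?ys] by simp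
qed

lemma G0_formula_eq:
  assumes "sorted_wrt (>) ns" and "sorted_wrt (>) ms"
    and "\<forall>k::nat. \<alpha> \<noteq> of_nat (Suc k)"
  defines "a \<equiv> complex_of_real \<alpha>"
  shows "G0_formula \<alpha> lam ns ms =
    prod_list (G_weights a ns ms) / (\<Prod>i<length ns + length ms + 1. pochhammer (1 - a) i) *
    vandermonde (map (\<lambda>m. - of_nat m) (rev ms) @ map (\<lambda>n. - a + 1 + of_nat n) ns @ [- lam - a])"
proof -
  define p where "p = length ns"
  define q where "q = length ms"
  define r where "r = p + q"
  define R where "R = pochhammer (1 - a) r"
  define P1 where "P1 = (\<Prod>k=1..r+1. pochhammer (- a + of_nat k) (r + 1 - k))"
  define P2 where "P2 = (\<Prod>j=1..split_idx ms r-1. pochhammer (- a + of_nat r + 1) (ms ! (j - 1) - r))"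
  define P3 where "P3 = (\<Prod>i=1..split_idx ns r-1. pochhammer (- a + of_nat r + 1) (ns ! (i - 1) - r))"
  define Q2 where "Q2 = (\<Prod>j=split_idx ms r..q. pochhammer (- a + 1 + of_nat (ms ! (j - 1))) (r - ms ! (j - 1)))"
  define Q3 where "Q3 = (\<Prod>i=split_idx ns r..p. pochhammer (- a + 1 + of_nat (ns ! (i - 1))) (r - ns ! (i - 1)))"
  define Fm where "Fm = (\<Prod>j<q. fact (ms ! j) :: complex)"
  define Fn where "Fn = (\<Prod>i<p. fact (ns ! i) :: complex)"
  define Pr where "Pr = (\<Prod>i<r+1. pochhammer (1 - a) i)"
  define V where "V = vandermonde (map (\<lambda>m. - of_nat m) (rev ms) @ map (\<lambda>n. - a + 1 + of_nat n) ns @ [- lam - a])"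
  have nonzero: "pochhammer (1 - a + of_nat d) k \<noteq> 0" for d k
    unfolding a_def using assms(3) by (rule pochhammer_1_minus_of_real_neq_0)
  then have nz: "R \<noteq> 0" "Pr \<noteq> 0" "Q2 \<noteq> 0" "Q3 \<noteq> 0" "Fm \<noteq> 0" "Fn \<noteq> 0"
    unfolding R_def Pr_def Q2_def Q3_def Fm_def Fn_def
    using nonzero[of 0] by (auto simp: prod_zero_iff algebra_simps)
  have "prod_list (G_weights a ns ms) = (\<Prod>j<q. pochhammer (1 - a) (ms ! j) / fact (ms ! j)) *
      (\<Prod>i<p. pochhammer (1 - a) (ns ! i) / fact (ns ! i))"
    unfolding G_weights_def p_def q_def by (simp add: prod_list_map_conv_prod_nth)
  also have "(\<Prod>j<q. pochhammer (1 - a) (ms ! j) / fact (ms ! j)) = R ^ q * P2 / (Q2 * Fm)"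
    using prod_pochhammer_div_fact_split_idx[OF assms(2) nonzero, of r]
    unfolding R_def P2_def Q2_def Fm_def q_def by (simp add: algebra_simps)
  also have "(\<Prod>i<p. pochhammer (1 - a) (ns ! i) / fact (ns ! i)) = R ^ p * P3 / (Q3 * Fn)"
    using prod_pochhammer_div_fact_split_idx[OF assms(1) nonzero, of r]
    unfolding R_def P3_def Q3_def Fn_def p_def by (simp add: algebra_simps)
  finally have weights: "prod_list (G_weights a ns ms) = R ^ q * P2 / (Q2 * Fm) * (R ^ p * P3 / (Q3 * Fn))" .
  have "P1 * Pr = R ^ (r + 1)"
    using prod_pochhammer_staircase[of "1 - a" r] unfolding P1_def Pr_def R_def by (simp add: algebra_simps)
  then have Pr: "inverse Pr = P1 / (R ^ q * R ^ p * R)"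
    using nz by (simp add: field_simps r_def power_add)
  have "prod_list (G_weights a ns ms) / Pr * V = P1 * P2 * P3 * V / (R * Q2 * Q3 * Fm * Fn)"
    unfolding weights divide_inverse[of _ Pr] Pr using nz by (simp add: field_simps)
  also have "\<dots> = G0_formula \<alpha> lam ns ms"
    unfolding G0_formula_def Let_def P1_def P2_def P3_def Q2_def Q3_def Fm_def Fn_def V_def
      R_def r_def p_def q_def a_def ..
  finally show ?thesis
    by (simp add: Pr_def V_def r_def p_def q_def)
qed

theorem corollary6p2:
  fixes \<alpha> :: real and lam :: complex and ns ms :: "nat list"
  assumes "sorted_wrt (>) ns" and "sorted_wrt (>) ms"
    and "\<forall>k::nat. \<alpha> \<noteq> of_nat (Suc k)"
  shows "\<exists>\<sigma>\<in>{1, -1::complex}.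
           (G_fun \<alpha> lam ns ms \<longlongrightarrow> \<sigma> * G0_formula \<alpha> lam ns ms) (at 0 within {z. 0 < Re z})"
proof -
  define a where "a = complex_of_real \<alpha>"
  obtain \<sigma> where \<sigma>: "\<sigma> \<in> {1, -1::complex}"
    and "vandermonde (map (\<lambda>m. - of_nat m) (rev ms) @ map (\<lambda>n. - a + 1 + of_nat n) ns @ [- lam - a]) =
      \<sigma> * vandermonde (G_nodes a lam ns ms)"
    using vandermonde_G0_nodes by blast
  moreover have "pochhammer (1 - a) i \<noteq> 0" for i
    using pochhammer_1_minus_of_real_neq_0[OF assms(3), of 0] by (simp add: a_def)
  ultimately have "wronskian (G_columns a lam ns ms) 0 = \<sigma> * G0_formula \<alpha> lam ns ms"
    using G0_formula_eq[OF assms, of lam] wronskian_G_columns_0[of a lam ns ms] by (auto simp: a_def)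
  with \<sigma> tendsto_G_fun_0[of \<alpha> lam ns ms] show ?thesis
    unfolding a_def by auto
qed

end
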